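(* Let $k\ge1$ be an integer, $a,b,c,d\ge0$, $\eta\in\mathbb{R}$, and let $(u_n,v_n)$ be any $(PS)_\eta$-sequence of $I$. Then $(u_n,v_n)$ is bounded in $H^1(\mathbb{R})\times H^1(\mathbb{R})$, and (i) $\|(u_n,v_n)\|_{H^1\times H^1}^2\to\frac{2k+2}{k}\eta$; (ii) $P(u_n,v_n)\to\frac{\eta}{k}$. In particular $\eta\ge0$, and $\eta=0$ if and only if $u_n\to0$ and $v_n\to0$ in $H^1(\mathbb{R})$.
   Context: $H(u,v)=\frac{a}{2k+2}(u^{2k+2}+v^{2k+2})+\frac{b}{k+1}(uv)^{k+1}+\frac{c}{k}u^{k+2}v^k+\frac{d}{k}u^kv^{k+2}$; $P(u,v)=\int H(u,v)dx$; $\|(u,v)\|_{H^1\times H^1}^2=\int(u^2+v^2+u'^2+v'^2)dx$; $I(u,v)=\frac12\|(u,v)\|_{H^1\times H^1}^2-P(u,v)$. A $(PS)_\eta$-sequence of $I$ is a sequence $(u_n,v_n)\subset H^1\times H^1$ with $I(u_n,v_n)\to\eta$ and $I'(u_n,v_n)\to0$ in $H^{-1}\times H^{-1}$. *)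

theory Defs
  imports "HOL-Analysis.Analysis"
begin

definition test_fun :: "(real \<Rightarrow> real) \<Rightarrow> bool" where
  "test_fun \<phi> \<longleftrightarrow> (\<forall>n. ((deriv ^^ n) \<phi>) differentiable_on UNIV)
      \<and> (\<exists>R. \<forall>x. R < \<bar>x\<bar> \<longrightarrow> \<phi> x = 0)"

definition L2 :: "(real \<Rightarrow> real) set" where
  "L2 = {f. f \<in> borel_measurable lborel \<and> integrable lborel (\<lambda>x. (f x)^2)}"

definition is_weak_deriv :: "(real \<Rightarrow> real) \<Rightarrow> (real \<Rightarrow> real) \<Rightarrow> bool" where
  "is_weak_deriv u g \<longleftrightarrow> (\<forall>\<phi>. test_fun \<phi> \<longrightarrow>
      (\<integral>x. u x * deriv \<phi> x \<partial>lborel) = - (\<integral>x. g x * \<phi> x \<partial>lborel))"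

(* H^1(R), functions represented pointwise *)
definition H1 :: "(real \<Rightarrow> real) set" where
  "H1 = {u. u \<in> L2 \<and> (\<exists>g. g \<in> L2 \<and> is_weak_deriv u g)}"

(* the (a.e. unique) weak derivative u' *)
definition wd :: "(real \<Rightarrow> real) \<Rightarrow> real \<Rightarrow> real" where
  "wd u = (SOME g. g \<in> L2 \<and> is_weak_deriv u g)"

definition H1norm2 :: "(real \<Rightarrow> real) \<Rightarrow> real" where
  "H1norm2 u = (\<integral>x. (u x)^2 + (wd u x)^2 \<partial>lborel)"

definition H1H1norm2 :: "(real \<Rightarrow> real) \<Rightarrow> (real \<Rightarrow> real) \<Rightarrow> real" where
  "H1H1norm2 u v = (\<integral>x. (u x)^2 + (v x)^2 + (wd u x)^2 + (wd v x)^2 \<partial>lborel)"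

definition Hfun :: "nat \<Rightarrow> real \<Rightarrow> real \<Rightarrow> real \<Rightarrow> real \<Rightarrow> real \<Rightarrow> real \<Rightarrow> real" where
  "Hfun k a b c d s t =
     a / (2 * real k + 2) * (s ^ (2*k+2) + t ^ (2*k+2))
   + b / (real k + 1) * (s * t) ^ (k+1)
   + c / real k * s ^ (k+2) * t ^ k
   + d / real k * s ^ k * t ^ (k+2)"

definition Pfun :: "nat \<Rightarrow> real \<Rightarrow> real \<Rightarrow> real \<Rightarrow> real \<Rightarrow> (real \<Rightarrow> real) \<Rightarrow> (real \<Rightarrow> real) \<Rightarrow> real" where
  "Pfun k a b c d u v = (\<integral>x. Hfun k a b c d (u x) (v x) \<partial>lborel)"

definition Ifun :: "nat \<Rightarrow> real \<Rightarrow> real \<Rightarrow> real \<Rightarrow> real \<Rightarrow> (real \<Rightarrow> real) \<Rightarrow> (real \<Rightarrow> real) \<Rightarrow> real" where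
  "Ifun k a b c d u v = H1H1norm2 u v / 2 - Pfun k a b c d u v"

(* I'(u,v) applied to the direction (\<phi>,\<psi>) (Gateaux = Frechet derivative, I is C^1) *)
definition dIfun :: "nat \<Rightarrow> real \<Rightarrow> real \<Rightarrow> real \<Rightarrow> real \<Rightarrow> (real \<Rightarrow> real) \<Rightarrow> (real \<Rightarrow> real)
      \<Rightarrow> (real \<Rightarrow> real) \<Rightarrow> (real \<Rightarrow> real) \<Rightarrow> real" where
  "dIfun k a b c d u v \<phi> \<psi> =
     deriv (\<lambda>t. Ifun k a b c d (\<lambda>x. u x + t * \<phi> x) (\<lambda>x. v x + t * \<psi> x)) 0"

(* (PS)_\<eta> sequence: I(u_n,v_n) \<rightarrow> \<eta>, I'(u_n,v_n) \<rightarrow> 0 in H^{-1} x H^{-1} (dual norm) *)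
definition PS_seq :: "nat \<Rightarrow> real \<Rightarrow> real \<Rightarrow> real \<Rightarrow> real \<Rightarrow> real
      \<Rightarrow> (nat \<Rightarrow> real \<Rightarrow> real) \<Rightarrow> (nat \<Rightarrow> real \<Rightarrow> real) \<Rightarrow> bool" where
  "PS_seq k a b c d \<eta> u v \<longleftrightarrow>
     (\<forall>n. u n \<in> H1 \<and> v n \<in> H1)
   \<and> (\<lambda>n. Ifun k a b c d (u n) (v n)) \<longlonglongrightarrow> \<eta>
   \<and> (\<forall>\<epsilon>>0. \<forall>\<^sub>F n in sequentially. \<forall>\<phi>\<in>H1. \<forall>\<psi>\<in>H1.
         \<bar>dIfun k a b c d (u n) (v n) \<phi> \<psi>\<bar> \<le> \<epsilon> * sqrt (H1H1norm2 \<phi> \<psi>))"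

end

theory Submission
  imports Defs "HOL-Real_Asymp.Real_Asymp"
begin

(* Since H is homogeneous of degree 2k+2, testing the derivative of I at (u,v) against (u,v)
   itself gives the Nehari identity I'(u,v)(u,v) = ||(u,v)||^2 - (2k+2) P(u,v).  Hence
   k ||(u_n,v_n)||^2 = (2k+2) I(u_n,v_n) - I'(u_n,v_n)(u_n,v_n) <= C + o(1) ||(u_n,v_n)||,
   so the sequence is bounded, the defect I'(u_n,v_n)(u_n,v_n) tends to 0, and both limits
   follow from I(u_n,v_n) -> eta.
   Because the weak derivative is chosen by Hilbert choice, the Nehari identity needs the weak
   derivative of s u to be s u' almost everywhere, i.e. uniqueness of weak derivatives.  This is
   the fundamental lemma of the calculus of variations, proved with the smooth bumps
   exp (-c / ((x - a) (b - x))) on (a,b), which tend to the indicator of (a,b) as c -> 0. *)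

section \<open>Smooth bump functions\<close>

definition exp_neg_inv :: "real \<Rightarrow> nat \<Rightarrow> real \<Rightarrow> real" where
  "exp_neg_inv c j t = (if t > 0 then exp (- c / t) / t ^ j else 0)"

lemma exp_neg_inv_has_real_derivative_pos:
  assumes "t > 0"
  shows "((\<lambda>t. exp (- c / t) / t ^ j) has_real_derivative
           c * exp_neg_inv c (j + 2) t - real j * exp_neg_inv c (j + 1) t) (at t)"
  using assms by (auto intro!: derivative_eq_intros
      simp: exp_neg_inv_def field_simps power2_eq_square split: nat_diff_split_asm)

lemma exp_neg_inv_has_real_derivative_0:
  assumes "c > 0"
  shows "(exp_neg_inv c j has_real_derivative 0) (at 0)"
  unfolding has_field_derivative_iff filterlim_at_split
proof
  show "((\<lambda>t. (exp_neg_inv c j t - exp_neg_inv c j 0) / (t - 0)) \<longlongrightarrow> 0) (at_left 0)"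
    by (rule Lim_transform_eventually[OF tendsto_const])
       (auto simp: eventually_at_left_field exp_neg_inv_def intro!: exI[of _ "-1"])
  have "((\<lambda>t. exp (- c / t) / t ^ (j + 1)) \<longlongrightarrow> 0) (at_right 0)"
    using assms by real_asymp
  then show "((\<lambda>t. (exp_neg_inv c j t - exp_neg_inv c j 0) / (t - 0)) \<longlongrightarrow> 0) (at_right 0)"
    by (rule Lim_transform_eventually)
       (auto simp: eventually_at_right_field exp_neg_inv_def intro!: exI[of _ 1])
qed

lemma exp_neg_inv_has_real_derivative:
  assumes "c > 0"
  shows "(exp_neg_inv c j has_real_derivative
           c * exp_neg_inv c (j + 2) t - real j * exp_neg_inv c (j + 1) t) (at t)"
proof (cases t "0::real" rule: linorder_cases)
  case less
  have "(exp_neg_inv c j has_real_derivative 0) (at t)"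
    by (rule has_field_derivative_transform_within_open[of "\<lambda>t. 0" _ _ "{..<0}"])
       (use less in \<open>auto simp: exp_neg_inv_def\<close>)
  then show ?thesis using less by (simp add: exp_neg_inv_def)
next
  case equal
  then show ?thesis
    using exp_neg_inv_has_real_derivative_0[OF assms] by (simp add: exp_neg_inv_def)
next
  case greater
  show ?thesis
    by (rule has_field_derivative_transform_within_open[OF
          exp_neg_inv_has_real_derivative_pos[OF greater], where S = "{0<..}"])
       (use greater in \<open>auto simp: exp_neg_inv_def\<close>)
qed

definition bump :: "real \<Rightarrow> real \<Rightarrow> real \<Rightarrow> real \<Rightarrow> real" where
  "bump c a b x = exp_neg_inv c 0 ((x - a) * (b - x))"

text \<open>Closed under differentiation, which is what makes \<^const>\<open>bump\<close> smooth.\<close>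
inductive_set bump_span :: "real \<Rightarrow> real \<Rightarrow> real \<Rightarrow> (real \<Rightarrow> real) set" for c a b where
  monom: "(\<lambda>x. poly p x * exp_neg_inv c j ((x - a) * (b - x))) \<in> bump_span c a b"
| add: "f \<in> bump_span c a b \<Longrightarrow> g \<in> bump_span c a b \<Longrightarrow> (\<lambda>x. f x + g x) \<in> bump_span c a b"

lemma bump_span_has_derivative:
  assumes "c > 0" and "f \<in> bump_span c a b"
  obtains f' where "f' \<in> bump_span c a b" and "\<And>x. (f has_real_derivative f' x) (at x)"
  using assms(2)
proof (induction arbitrary: thesis)
  case (monom p j)
  define q where "q = p * [:a + b, -2:]"
  let ?E = "\<lambda>i x. exp_neg_inv c i ((x - a) * (b - x))"
  let ?f' = "\<lambda>x. poly (pderiv p) x * ?E j x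
     + (poly (smult c q) x * ?E (j + 2) x + poly (smult (- real j) q) x * ?E (j + 1) x)"
  show ?case
  proof (rule monom.prems)
    show "?f' \<in> bump_span c a b" by (intro bump_span.intros)
    fix x
    have "((\<lambda>x. (x - a) * (b - x)) has_real_derivative a + b - 2 * x) (at x)"
      by (auto intro!: derivative_eq_intros)
    from DERIV_mult[OF poly_DERIV[of p x]
        DERIV_chain2[OF exp_neg_inv_has_real_derivative[OF assms(1)] this]]
    show "((\<lambda>x. poly p x * ?E j x) has_real_derivative ?f' x) (at x)"
      by (rule DERIV_cong) (simp add: q_def algebra_simps)
  qed
next
  case (add f g)
  obtain f' g' where "f' \<in> bump_span c a b" "g' \<in> bump_span c a b"
    "\<And>x. (f has_real_derivative f' x) (at x)" "\<And>x. (g has_real_derivative g' x) (at x)"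
    using add.IH by metis
  then show ?case
    by (intro add.prems[of "\<lambda>x. f' x + g' x"] bump_span.add DERIV_add)
qed

lemma bump_span_higher_deriv:
  assumes "c > 0" and "f \<in> bump_span c a b"
  shows "(deriv ^^ n) f \<in> bump_span c a b"
proof (induction n)
  case 0
  then show ?case using assms(2) by simp
next
  case (Suc n)
  obtain f' where "f' \<in> bump_span c a b" "\<And>x. ((deriv ^^ n) f has_real_derivative f' x) (at x)"
    using bump_span_has_derivative[OF assms(1) Suc] by metis
  moreover from this(2) have "deriv ((deriv ^^ n) f) = f'"
    by (intro ext DERIV_imp_deriv)
  ultimately show ?case by simp
qed

lemma bump_span_differentiable:
  assumes "c > 0" and "f \<in> bump_span c a b"
  shows "f differentiable_on UNIV"
  using bump_span_has_derivative[OF assms]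
  by (metis differentiable_on_def real_differentiable_def differentiable_at_withinI)

lemma bump_eq_0: "a \<le> b \<Longrightarrow> x \<notin> {a<..<b} \<Longrightarrow> bump c a b x = 0"
  by (auto simp: bump_def exp_neg_inv_def zero_less_mult_iff)

lemma test_fun_bump:
  assumes "c > 0" and "a \<le> b"
  shows "test_fun (bump c a b)"
proof -
  have "(\<lambda>x. poly 1 x * exp_neg_inv c 0 ((x - a) * (b - x))) \<in> bump_span c a b"
    by (rule bump_span.monom)
  then have "bump c a b \<in> bump_span c a b" by (simp add: bump_def[abs_def])
  then have "(deriv ^^ n) (bump c a b) differentiable_on UNIV" for n
    by (intro bump_span_differentiable[OF assms(1)] bump_span_higher_deriv[OF assms(1)])
  moreover have "bump c a b x = 0" if "\<bar>a\<bar> + \<bar>b\<bar> < \<bar>x\<bar>" for x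
    using that assms(2) by (intro bump_eq_0) auto
  ultimately show ?thesis unfolding test_fun_def by blast
qed

lemma bump_nonneg: "0 \<le> bump c a b x"
  and bump_le_1: "c \<ge> 0 \<Longrightarrow> bump c a b x \<le> 1"
  by (auto simp: bump_def exp_neg_inv_def)

lemma bump_tendsto_indicator:
  assumes "a \<le> b"
  shows "(\<lambda>i. bump (inverse (real (Suc i))) a b x) \<longlonglongrightarrow> indicator {a<..<b} x"
proof (cases "x \<in> {a<..<b}")
  case True
  then have pos: "(x - a) * (b - x) > 0" by simp
  have "(\<lambda>i. exp (- inverse (real (Suc i)) / ((x - a) * (b - x))))
      \<longlonglongrightarrow> exp (- 0 / ((x - a) * (b - x)))"
    by (intro tendsto_intros LIMSEQ_inverse_real_of_nat) (use pos in auto)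
  then show ?thesis using True pos by (simp add: bump_def exp_neg_inv_def)
next
  case False
  then show ?thesis using assms by (simp add: bump_eq_0)
qed

section \<open>Fundamental lemma of the calculus of variations\<close>

lemma bump_measurable [measurable]: "bump c a b \<in> borel_measurable borel"
  unfolding bump_def exp_neg_inv_def by measurable

lemma abs_mult_bump_le:
  assumes "a \<le> b" and "c \<ge> 0"
  shows "\<bar>y * bump c a b x\<bar> \<le> indicator {a..b} x * \<bar>y\<bar>"
proof (cases "x \<in> {a..b}")
  case True
  then show ?thesis using bump_nonneg bump_le_1[OF assms(2)] by (simp add: abs_mult mult_left_le)
next
  case False
  then have "bump c a b x = 0" by (intro bump_eq_0[OF assms(1)]) auto
  then show ?thesis by simp
qed

lemma integrable_mult_bump:
  fixes h :: "real \<Rightarrow> real"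
  assumes "h \<in> borel_measurable borel" and "set_integrable lborel {a..b} h"
    and "a \<le> b" and "c \<ge> 0"
  shows "integrable lborel (\<lambda>x. h x * bump c a b x)"
proof (rule Bochner_Integration.integrable_bound)
  show "integrable lborel (\<lambda>x. indicator {a..b} x * \<bar>h x\<bar>)"
    using set_integrable_abs[OF assms(2)] by (simp add: set_integrable_def)
  show "AE x in lborel. norm (h x * bump c a b x) \<le> norm (indicator {a..b} x * \<bar>h x\<bar>)"
    using abs_mult_bump_le[OF assms(3,4)] by (intro AE_I2) (simp add: abs_mult)
qed (use assms(1) in measurable)

lemma interval_integral_eq_0_if_bump_integrals_eq_0:
  fixes h :: "real \<Rightarrow> real"
  assumes h_meas: "h \<in> borel_measurable borel"
    and h_loc: "\<And>a b. set_integrable lborel {a..b} h"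
    and h_bump: "\<And>c a b. c > 0 \<Longrightarrow> a < b \<Longrightarrow> (\<integral>x. h x * bump c a b x \<partial>lborel) = 0"
  shows "(\<integral>x. indicator {a<..<b} x * h x \<partial>lborel) = 0"
proof (cases "a < b")
  case False
  then show ?thesis by simp
next
  case True
  let ?s = "\<lambda>i x. h x * bump (inverse (real (Suc i))) a b x"
  from True have "a \<le> b" by simp
  have "(\<lambda>i. \<integral>x. ?s i x \<partial>lborel) \<longlonglongrightarrow> (\<integral>x. indicator {a<..<b} x * h x \<partial>lborel)"
  proof (rule integral_dominated_convergence[where w = "\<lambda>x. indicator {a..b} x * \<bar>h x\<bar>"])
    show "integrable lborel (\<lambda>x. indicator {a..b} x * \<bar>h x\<bar>)"
      using set_integrable_abs[OF h_loc] by (simp add: set_integrable_def)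
    show "AE x in lborel. (\<lambda>i. ?s i x) \<longlonglongrightarrow> indicator {a<..<b} x * h x"
    proof (intro AE_I2)
      fix x
      show "(\<lambda>i. ?s i x) \<longlonglongrightarrow> indicator {a<..<b} x * h x"
        using tendsto_mult_left[OF bump_tendsto_indicator[OF \<open>a \<le> b\<close>], of "h x"]
        by (simp add: mult.commute)
    qed
    show "AE x in lborel. norm (?s i x) \<le> indicator {a..b} x * \<bar>h x\<bar>" for i
      using abs_mult_bump_le[OF \<open>a \<le> b\<close>, of "inverse (real (Suc i))"] by (intro AE_I2) simp
  qed (use h_meas in measurable)
  moreover have "(\<integral>x. ?s i x \<partial>lborel) = 0" for i
    by (rule h_bump) (use True in simp_all)
  ultimately show ?thesis by (simp add: LIMSEQ_const_iff)
qed

lemma AE_eq_0_if_Ioi_integrals_eq_0: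
  fixes f :: "real \<Rightarrow> real"
  assumes f: "integrable lborel f"
    and f_Ioi: "\<And>x. (\<integral>y. indicator {x<..} y * f y \<partial>lborel) = 0"
  shows "AE y in lborel. f y = 0"
proof -
  have [measurable]: "f \<in> borel_measurable borel"
    using borel_measurable_integrable[OF f] by simp
  define pos where "pos s x = (\<integral>y. indicator {x<..} y * max 0 (s * f y) \<partial>lborel)" for s x
  have int_pos: "integrable lborel (\<lambda>y. indicator {x<..} y * max 0 (s * f y))" for s x
    using integrable_mult_indicator[of "{x<..}" lborel "\<lambda>y. max 0 (s * f y)"] f by auto
  have emeasure_Ioi: "emeasure (density lborel (\<lambda>y. ennreal (s * f y))) {x<..} = ennreal (pos s x)"
    for s x
  proof -
    have "emeasure (density lborel (\<lambda>y. ennreal (s * f y))) {x<..}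
        = (\<integral>\<^sup>+ y. ennreal (indicator {x<..} y * max 0 (s * f y)) \<partial>lborel)"
      by (subst emeasure_density)
         (auto intro!: nn_integral_cong split: split_indicator simp: ennreal_max_0)
    also have "\<dots> = ennreal (pos s x)"
      unfolding pos_def by (intro nn_integral_eq_integral int_pos) auto
    finally show ?thesis .
  qed
  have "pos 1 x - pos (-1) x = (\<integral>y. indicator {x<..} y * f y \<partial>lborel)" for x
    unfolding pos_def Bochner_Integration.integral_diff[OF int_pos int_pos, symmetric]
    by (intro Bochner_Integration.integral_cong) (auto split: split_indicator)
  then have pos_eq: "pos 1 x = pos (-1) x" for x
    using f_Ioi[of x] by (metis eq_iff_diff_eq_0)
  have "density lborel (\<lambda>y. ennreal (1 * f y)) = density lborel (\<lambda>y. ennreal ((-1) * f y))"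
  proof (rule measure_eqI_lessThan)
    show "emeasure (density lborel (\<lambda>y. ennreal (1 * f y))) {x<..} < \<infinity>" for x
      unfolding emeasure_Ioi by simp
    show "emeasure (density lborel (\<lambda>y. ennreal (1 * f y))) {x<..}
        = emeasure (density lborel (\<lambda>y. ennreal ((-1) * f y))) {x<..}" for x
      unfolding emeasure_Ioi pos_eq ..
  qed auto
  then have "AE y in lborel. ennreal (1 * f y) = ennreal ((-1) * f y)"
    by (intro sigma_finite_measure.density_unique[OF sigma_finite_lborel]) auto
  then show ?thesis
  proof eventually_elim
    case (elim y)
    then show ?case by (cases "f y" "0::real" rule: linorder_cases) (auto simp: ennreal_neg)
  qed
qed

lemma AE_eq_0_if_bump_integrals_eq_0:
  fixes h :: "real \<Rightarrow> real"
  assumes h_meas: "h \<in> borel_measurable borel"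
    and h_loc: "\<And>a b. set_integrable lborel {a..b} h"
    and h_bump: "\<And>c a b. c > 0 \<Longrightarrow> a < b \<Longrightarrow> (\<integral>x. h x * bump c a b x \<partial>lborel) = 0"
  shows "AE x in lborel. h x = 0"
proof -
  have "AE x in lborel. indicator {-real N<..<real N} x * h x = 0" for N :: nat
  proof (rule AE_eq_0_if_Ioi_integrals_eq_0)
    show "integrable lborel (\<lambda>x. indicator {-real N<..<real N} x * h x)"
      using set_integrable_subset[OF h_loc, of "{-real N<..<real N}" "-real N" "real N"]
      by (simp add: set_integrable_def greaterThanLessThan_subseteq_atLeastAtMost_iff)
    fix x
    have "(\<integral>y. indicator {x<..} y * (indicator {-real N<..<real N} y * h y) \<partial>lborel)
        = (\<integral>y. indicator {max x (-real N)<..<real N} y * h y \<partial>lborel)"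
      by (intro Bochner_Integration.integral_cong) (auto split: split_indicator)
    then show "(\<integral>y. indicator {x<..} y * (indicator {-real N<..<real N} y * h y) \<partial>lborel) = 0"
      using interval_integral_eq_0_if_bump_integrals_eq_0[OF h_meas h_loc h_bump] by simp
  qed
  then have "AE x in lborel. \<forall>N::nat. indicator {-real N<..<real N} x * h x = 0"
    by (subst AE_all_countable) blast
  then show ?thesis
  proof eventually_elim
    case (elim x)
    obtain N :: nat where "\<bar>x\<bar> < real N" using reals_Archimedean2 by blast
    then show ?case using elim[rule_format, of N] by (auto split: split_indicator_asm)
  qed
qed

section \<open>Weak derivatives\<close>

lemma L2_measurable [measurable_dest]: "f \<in> L2 \<Longrightarrow> f \<in> borel_measurable borel"
  by (simp add: L2_def)

lemma L2_set_integrable: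
  assumes "f \<in> L2"
  shows "set_integrable lborel {a..b} f"
  unfolding set_integrable_def
proof (rule Bochner_Integration.integrable_bound)
  show "integrable lborel (\<lambda>x. f x ^ 2 + indicator {a..b} x)"
    using assms by (intro Bochner_Integration.integrable_add integrable_real_indicator)
      (auto simp: L2_def emeasure_lborel_Icc_eq)
  have "\<bar>y\<bar> \<le> y ^ 2 + 1" for y :: real
  proof -
    have "0 \<le> (\<bar>y\<bar> - 1) ^ 2" by simp
    then show ?thesis using abs_ge_zero[of y] by (simp add: power2_diff)
  qed
  then show "AE x in lborel. norm (indicator {a..b} x *\<^sub>R f x) \<le> norm (f x ^ 2 + indicator {a..b} x)"
    by (intro AE_I2) (auto split: split_indicator)
qed (use assms in measurable)

lemma weak_deriv_unique:
  assumes g1: "g1 \<in> L2" "is_weak_deriv u g1" and g2: "g2 \<in> L2" "is_weak_deriv u g2"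
  shows "AE x in lborel. g1 x = g2 x"
proof -
  have "AE x in lborel. g1 x - g2 x = 0"
  proof (rule AE_eq_0_if_bump_integrals_eq_0)
    show "(\<lambda>x. g1 x - g2 x) \<in> borel_measurable borel"
      using g1 g2 by measurable
    show "set_integrable lborel {a..b} (\<lambda>x. g1 x - g2 x)" for a b
      using L2_set_integrable[OF g1(1)] L2_set_integrable[OF g2(1)] by (rule set_integral_diff)
    fix c a b :: real
    assume "c > 0" "a < b"
    then have "test_fun (bump c a b)" by (intro test_fun_bump) auto
    then have "(\<integral>x. u x * deriv (bump c a b) x \<partial>lborel) = - (\<integral>x. g x * bump c a b x \<partial>lborel)"
      if "is_weak_deriv u g" for g
      using that unfolding is_weak_deriv_def by blast
    from this[OF g1(2)] this[OF g2(2)]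
    have "(\<integral>x. g1 x * bump c a b x \<partial>lborel) = (\<integral>x. g2 x * bump c a b x \<partial>lborel)"
      by simp
    moreover have "integrable lborel (\<lambda>x. g x * bump c a b x)" if "g \<in> L2" for g
      using that \<open>c > 0\<close> \<open>a < b\<close> by (intro integrable_mult_bump L2_set_integrable) auto
    ultimately show "(\<integral>x. (g1 x - g2 x) * bump c a b x \<partial>lborel) = 0"
      using g1(1) g2(1) by (simp add: left_diff_distrib)
  qed
  then show ?thesis by eventually_elim simp
qed

lemma H1_wd:
  assumes "u \<in> H1"
  shows "wd u \<in> L2" and "is_weak_deriv u (wd u)"
  using someI_ex[of "\<lambda>g. g \<in> L2 \<and> is_weak_deriv u g"] assms by (auto simp: H1_def wd_def)

lemma wd_AE_eq:
  assumes "g \<in> L2" and "is_weak_deriv u g"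
  shows "AE x in lborel. wd u x = g x"
proof (rule weak_deriv_unique)
  show "wd u \<in> L2" and "is_weak_deriv u (wd u)"
    unfolding wd_def using someI[of "\<lambda>g. g \<in> L2 \<and> is_weak_deriv u g", OF conjI[OF assms]] by auto
qed (fact assms)+

lemma L2_scale:
  assumes "f \<in> L2"
  shows "(\<lambda>x. s * f x) \<in> L2"
proof -
  have [measurable]: "f \<in> borel_measurable borel" and "integrable lborel (\<lambda>x. (f x)\<^sup>2)"
    using assms by (auto simp: L2_def)
  then show ?thesis by (simp add: L2_def power_mult_distrib)
qed

lemma is_weak_deriv_scale:
  assumes "is_weak_deriv u g"
  shows "is_weak_deriv (\<lambda>x. s * u x) (\<lambda>x. s * g x)"
  using assms by (simp add: is_weak_deriv_def mult.assoc)

lemma H1_scale: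
  assumes "u \<in> H1"
  shows "(\<lambda>x. s * u x) \<in> H1"
proof -
  obtain g where "u \<in> L2" "g \<in> L2" "is_weak_deriv u g"
    using assms by (auto simp: H1_def)
  then show ?thesis
    unfolding H1_def by (intro CollectI conjI exI[of _ "\<lambda>x. s * g x"] L2_scale is_weak_deriv_scale)
qed

lemma H1_measurable:
  assumes "u \<in> H1"
  shows "u \<in> borel_measurable borel" and "wd u \<in> borel_measurable borel"
  using assms H1_wd(1)[OF assms] by (auto simp: H1_def L2_def)

lemma wd_scale_AE:
  assumes "u \<in> H1"
  shows "AE x in lborel. wd (\<lambda>x. s * u x) x = s * wd u x"
  using H1_wd[OF assms] by (intro wd_AE_eq L2_scale is_weak_deriv_scale)

lemma H1H1norm2_scale:
  assumes u: "u \<in> H1" and v: "v \<in> H1"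
  shows "H1H1norm2 (\<lambda>x. s * u x) (\<lambda>x. s * v x) = s ^ 2 * H1H1norm2 u v"
proof -
  have [measurable]: "u \<in> borel_measurable borel" "v \<in> borel_measurable borel"
    "wd u \<in> borel_measurable borel" "wd v \<in> borel_measurable borel"
    "wd (\<lambda>x. s * u x) \<in> borel_measurable borel" "wd (\<lambda>x. s * v x) \<in> borel_measurable borel"
    using H1_measurable u v H1_scale by blast+
  have "H1H1norm2 (\<lambda>x. s * u x) (\<lambda>x. s * v x)
      = (\<integral>x. s ^ 2 * ((u x)\<^sup>2 + (v x)\<^sup>2 + (wd u x)\<^sup>2 + (wd v x)\<^sup>2) \<partial>lborel)"
    unfolding H1H1norm2_def
    using wd_scale_AE[OF u, of s] wd_scale_AE[OF v, of s]
    by (intro integral_cong_AE) (auto simp: power_mult_distrib distrib_left elim!: AE_mp)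
  also have "\<dots> = s ^ 2 * H1H1norm2 u v"
    unfolding H1H1norm2_def by (rule integral_mult_right_zero)
  finally show ?thesis .
qed

lemma H1norm2_nonneg: "0 \<le> H1norm2 u"
  unfolding H1norm2_def by (rule Bochner_Integration.integral_nonneg) simp

lemma H1H1norm2_eq_add:
  assumes u: "u \<in> H1" and v: "v \<in> H1"
  shows "H1H1norm2 u v = H1norm2 u + H1norm2 v"
proof -
  have "integrable lborel (\<lambda>x. (w x)\<^sup>2 + (wd w x)\<^sup>2)" if "w \<in> H1" for w
    using that H1_wd(1)[OF that] by (auto simp: H1_def L2_def)
  from Bochner_Integration.integral_add[OF this[OF u] this[OF v]] show ?thesis
    unfolding H1H1norm2_def H1norm2_def by (simp add: ac_simps)
qed

section \<open>The Nehari identity\<close>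

lemma Hfun_homogeneous: "Hfun k a b c d (s * x) (s * y) = s ^ (2 * k + 2) * Hfun k a b c d x y"
proof -
  have "s ^ (2 * k + 2) = s ^ (k + 1) * s ^ (k + 1)" "s ^ (2 * k + 2) = s ^ (k + 2) * s ^ k"
    "s ^ (k * 2) = s ^ k * s ^ k"
    by (simp_all add: power_add[symmetric] mult_2 mult_2_right)
  then show ?thesis
    unfolding Hfun_def by (simp add: power_mult_distrib algebra_simps)
qed

lemma Pfun_homogeneous:
  "Pfun k a b c d (\<lambda>x. s * u x) (\<lambda>x. s * v x) = s ^ (2 * k + 2) * Pfun k a b c d u v"
  unfolding Pfun_def Hfun_homogeneous by (rule integral_mult_right_zero)

lemma Ifun_scale:
  assumes "u \<in> H1" and "v \<in> H1"
  shows "Ifun k a b c d (\<lambda>x. s * u x) (\<lambda>x. s * v x)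
    = s ^ 2 * H1H1norm2 u v / 2 - s ^ (2 * k + 2) * Pfun k a b c d u v"
  unfolding Ifun_def H1H1norm2_scale[OF assms] Pfun_homogeneous ..

lemma dIfun_self:
  assumes "u \<in> H1" and "v \<in> H1"
  shows "dIfun k a b c d u v u v = H1H1norm2 u v - (2 * real k + 2) * Pfun k a b c d u v"
proof -
  let ?N = "H1H1norm2 u v" and ?P = "Pfun k a b c d u v"
  have ray: "(\<lambda>x. w x + t * w x) = (\<lambda>x. (1 + t) * w x)" for w :: "real \<Rightarrow> real" and t
    by (simp add: algebra_simps)
  have "(\<lambda>t. Ifun k a b c d (\<lambda>x. u x + t * u x) (\<lambda>x. v x + t * v x))
      = (\<lambda>t. (1 + t) ^ 2 * ?N / 2 - (1 + t) ^ (2 * k + 2) * ?P)"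
    unfolding ray Ifun_scale[OF assms] ..
  moreover have "((\<lambda>t. (1 + t) ^ 2 * ?N / 2 - (1 + t) ^ (2 * k + 2) * ?P)
      has_real_derivative ?N - (2 * real k + 2) * ?P) (at 0)"
    by (auto intro!: derivative_eq_intros)
  ultimately show ?thesis
    unfolding dIfun_def by (simp add: DERIV_imp_deriv)
qed

section \<open>Palais-Smale sequences\<close>

lemma PS_energy_bounded:
  fixes N P :: "nat \<Rightarrow> real" and \<mu> :: real
  assumes "\<mu> > 2" and N_nonneg: "\<And>n. 0 \<le> N n"
    and J: "convergent (\<lambda>n. N n / 2 - P n)"
    and defect: "\<And>\<epsilon>. \<epsilon> > 0 \<Longrightarrow> \<forall>\<^sub>F n in sequentially. \<bar>N n - \<mu> * P n\<bar> \<le> \<epsilon> * sqrt (N n)"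
  obtains C where "C > 0" and "\<forall>\<^sub>F n in sequentially. N n \<le> C"
proof -
  define \<kappa> where "\<kappa> = \<mu> / 2 - 1"
  have "\<kappa> > 0" using \<open>\<mu> > 2\<close> by (simp add: \<kappa>_def)
  obtain B where "B > 0" and B: "\<And>n. \<bar>N n / 2 - P n\<bar> \<le> B"
    using convergent_imp_Bseq[OF J] by (auto elim!: BseqE)
  have "\<forall>\<^sub>F n in sequentially. N n \<le> 2 * \<mu> * B / \<kappa> + 1"
    using defect[OF \<open>\<kappa> > 0\<close>]
  proof eventually_elim
    case (elim n)
    have "\<kappa> * N n = \<mu> * (N n / 2 - P n) - (N n - \<mu> * P n)"
      by (simp add: \<kappa>_def algebra_simps)
    also have "\<dots> \<le> \<mu> * B + \<kappa> * sqrt (N n)"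
    proof -
      have "\<mu> * (N n / 2 - P n) \<le> \<mu> * B"
        using B[of n] \<open>\<mu> > 2\<close> by (intro mult_left_mono) auto
      then show ?thesis using elim by linarith
    qed
    also have "\<dots> \<le> \<mu> * B + \<kappa> * ((N n + 1) / 2)"
      using arith_geo_mean_sqrt[OF N_nonneg[of n], of 1] \<open>\<kappa> > 0\<close> by simp
    finally show ?case
      using \<open>\<kappa> > 0\<close> by (simp add: field_simps)
  qed
  moreover have "0 < 2 * \<mu> * B / \<kappa> + 1"
    using \<open>B > 0\<close> \<open>\<kappa> > 0\<close> \<open>\<mu> > 2\<close> by (simp add: add_pos_nonneg)
  ultimately show ?thesis using that by blast
qed

lemma PS_energy_limits:
  fixes N P :: "nat \<Rightarrow> real" and \<mu> \<eta> :: real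
  assumes "\<mu> > 2" and N_nonneg: "\<And>n. 0 \<le> N n"
    and J: "(\<lambda>n. N n / 2 - P n) \<longlonglongrightarrow> \<eta>"
    and defect: "\<And>\<epsilon>. \<epsilon> > 0 \<Longrightarrow> \<forall>\<^sub>F n in sequentially. \<bar>N n - \<mu> * P n\<bar> \<le> \<epsilon> * sqrt (N n)"
  shows "N \<longlonglongrightarrow> 2 * \<mu> / (\<mu> - 2) * \<eta>" and "P \<longlonglongrightarrow> 2 / (\<mu> - 2) * \<eta>"
proof -
  obtain C where "C > 0" and C: "\<forall>\<^sub>F n in sequentially. N n \<le> C"
    using PS_energy_bounded[OF assms(1,2) convergentI[OF J] defect] by blast
  have defect_0: "(\<lambda>n. N n - \<mu> * P n) \<longlonglongrightarrow> 0"
  proof (rule tendstoI)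
    fix e :: real
    assume "e > 0"
    then have "e / (2 * sqrt C) > 0" using \<open>C > 0\<close> by simp
    from defect[OF this] C show "\<forall>\<^sub>F n in sequentially. dist (N n - \<mu> * P n) 0 < e"
    proof eventually_elim
      case (elim n)
      have "e / (2 * sqrt C) * sqrt (N n) \<le> e / (2 * sqrt C) * sqrt C"
        using elim(2) \<open>e > 0\<close> \<open>C > 0\<close> by (intro mult_left_mono) auto
      also have "\<dots> < e" using \<open>e > 0\<close> \<open>C > 0\<close> by simp
      finally show ?case using elim(1) by simp
    qed
  qed
  have N_eq: "N = (\<lambda>n. (\<mu> * (N n / 2 - P n) - (N n - \<mu> * P n)) / (\<mu> / 2 - 1))"
    using \<open>\<mu> > 2\<close> by (auto simp: field_simps)
  have "N \<longlonglongrightarrow> (\<mu> * \<eta> - 0) / (\<mu> / 2 - 1)"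
    using \<open>\<mu> > 2\<close> by (subst N_eq) (intro tendsto_intros J defect_0, simp)
  moreover have "(\<mu> * \<eta> - 0) / (\<mu> / 2 - 1) = 2 * \<mu> / (\<mu> - 2) * \<eta>"
    using \<open>\<mu> > 2\<close> by (simp add: field_simps)
  ultimately show N_lim: "N \<longlonglongrightarrow> 2 * \<mu> / (\<mu> - 2) * \<eta>" by simp
  have "(\<lambda>n. N n / 2 - (N n / 2 - P n)) \<longlonglongrightarrow> 2 * \<mu> / (\<mu> - 2) * \<eta> / 2 - \<eta>"
    by (intro tendsto_intros N_lim J) simp
  moreover have "2 * \<mu> / (\<mu> - 2) * \<eta> / 2 - \<eta> = 2 / (\<mu> - 2) * \<eta>"
    using \<open>\<mu> > 2\<close> by (simp add: field_simps)
  ultimately show "P \<longlonglongrightarrow> 2 / (\<mu> - 2) * \<eta>" by simp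
qed

lemma nonneg_tendsto_pos_mult:
  fixes N :: "nat \<Rightarrow> real"
  assumes N_nonneg: "\<And>n. 0 \<le> N n" and N_lim: "N \<longlonglongrightarrow> \<kappa> * \<eta>" and "\<kappa> > 0"
  shows "0 \<le> \<eta>" and "\<eta> = 0 \<longleftrightarrow> N \<longlonglongrightarrow> 0"
proof -
  have "0 \<le> \<kappa> * \<eta>"
    by (rule LIMSEQ_le_const[OF N_lim]) (use N_nonneg in auto)
  then show "0 \<le> \<eta>" using \<open>\<kappa> > 0\<close> by (simp add: zero_le_mult_iff)
  show "\<eta> = 0 \<longleftrightarrow> N \<longlonglongrightarrow> 0"
    using N_lim LIMSEQ_unique \<open>\<kappa> > 0\<close> by fastforce
qed

lemma tendsto_add_nonneg_0_iff:
  fixes f g :: "nat \<Rightarrow> real"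
  assumes "\<And>n. 0 \<le> f n" and "\<And>n. 0 \<le> g n"
  shows "(\<lambda>n. f n + g n) \<longlonglongrightarrow> 0 \<longleftrightarrow> f \<longlonglongrightarrow> 0 \<and> g \<longlonglongrightarrow> 0"
  using assms tendsto_add[of f 0 sequentially g 0]
    tendsto_sandwich[of "\<lambda>_. 0" f sequentially "\<lambda>n. f n + g n" 0]
    tendsto_sandwich[of "\<lambda>_. 0" g sequentially "\<lambda>n. f n + g n" 0]
  by (auto simp: add_increasing add_increasing2)

theorem proposition3p8:
  fixes k :: nat and a b c d \<eta> :: real
    and u v :: "nat \<Rightarrow> real \<Rightarrow> real"
  assumes "k \<ge> 1" and "a \<ge> 0" and "b \<ge> 0" and "c \<ge> 0" and "d \<ge> 0"
    and "PS_seq k a b c d \<eta> u v"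
  shows "(\<exists>M. \<forall>n. H1H1norm2 (u n) (v n) \<le> M)
    \<and> (\<lambda>n. H1H1norm2 (u n) (v n)) \<longlonglongrightarrow> (2 * real k + 2) / real k * \<eta>
    \<and> (\<lambda>n. Pfun k a b c d (u n) (v n)) \<longlonglongrightarrow> \<eta> / real k
    \<and> \<eta> \<ge> 0
    \<and> (\<eta> = 0 \<longleftrightarrow> ((\<lambda>n. H1norm2 (u n)) \<longlonglongrightarrow> 0 \<and> (\<lambda>n. H1norm2 (v n)) \<longlonglongrightarrow> 0))"
proof -
  define N where "N n = H1H1norm2 (u n) (v n)" for n
  define P where "P n = Pfun k a b c d (u n) (v n)" for n
  have H1: "\<And>n. u n \<in> H1" "\<And>n. v n \<in> H1"
    and I: "(\<lambda>n. N n / 2 - P n) \<longlonglongrightarrow> \<eta>"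
    and dI: "\<And>\<epsilon>. \<epsilon> > 0 \<Longrightarrow> \<forall>\<^sub>F n in sequentially. \<forall>\<phi>\<in>H1. \<forall>\<psi>\<in>H1.
        \<bar>dIfun k a b c d (u n) (v n) \<phi> \<psi>\<bar> \<le> \<epsilon> * sqrt (H1H1norm2 \<phi> \<psi>)"
    using assms(6) by (auto simp: PS_seq_def Ifun_def N_def P_def)
  have N_split: "N n = H1norm2 (u n) + H1norm2 (v n)" for n
    unfolding N_def using H1 by (rule H1H1norm2_eq_add)
  then have N_nonneg: "0 \<le> N n" for n by (simp add: H1norm2_nonneg add_nonneg_nonneg)
  have defect: "\<forall>\<^sub>F n in sequentially. \<bar>N n - (2 * real k + 2) * P n\<bar> \<le> \<epsilon> * sqrt (N n)"
    if "\<epsilon> > 0" for \<epsilon>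
    using dI[OF that] by eventually_elim (use H1 in \<open>auto simp: N_def P_def dIfun_self[symmetric]\<close>)
  have "2 * real k + 2 > 2" and "(2 * real k + 2) / real k > 0"
    and coefficients: "2 * (2 * real k + 2) / (2 * real k + 2 - 2) = (2 * real k + 2) / real k"
      "2 / (2 * real k + 2 - 2) * \<eta> = \<eta> / real k"
    using assms(1) by (simp_all add: field_simps)
  from PS_energy_limits[OF this(1) N_nonneg I defect]
  have N_lim: "N \<longlonglongrightarrow> (2 * real k + 2) / real k * \<eta>" and P_lim: "P \<longlonglongrightarrow> \<eta> / real k"
    unfolding coefficients by blast+
  moreover have "\<exists>M. \<forall>n. N n \<le> M"
    using convergent_imp_Bseq[OF convergentI[OF N_lim]] by (auto simp: Bseq_def abs_le_iff)
  ultimately show ?thesis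
    using nonneg_tendsto_pos_mult[OF N_nonneg N_lim \<open>(2 * real k + 2) / real k > 0\<close>]
      tendsto_add_nonneg_0_iff[OF H1norm2_nonneg H1norm2_nonneg]
    by (simp add: N_split[abs_def] N_def[symmetric] P_def[symmetric])
qed

end
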